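(* For every $n\geq 1$, the Fibonacci-sum set-graph $G^F_{A^{(n)}}$ is Eulerian.
   Context: Let $\mathcal{F}=\{f_m\}_{m\ge 0}$ be the Fibonacci numbers, $f_0=0$, $f_1=1$, $f_m=f_{m-1}+f_{m-2}$. The Fibonacci-sum set-graph $G^F_{A^{(n)}}$ is the multigraph (loops and multiple edges allowed) whose vertices are in bijection with the nonempty subsets of $A^{(n)}=\{1,\dots,n\}$; between the vertices corresponding to distinct subsets $S,T$ there is one edge for each pair $(i',j')$ with $i'\in S$, $j'\in T$, $i'\neq j'$ and $i'+j'\in\mathcal{F}$, and at the vertex corresponding to $S$ there is one loop for each pair of distinct elements $i',j'\in S$ with $i'+j'\in\mathcal{F}$. *)

theory Defs
  imports "HOL-Number_Theory.Fib"
begin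

definition fsg_vertices :: "nat \<Rightarrow> nat set set" where
  "fsg_vertices n = {S. S \<subseteq> {1..n} \<and> S \<noteq> {}}"

text \<open>An edge is an unordered pair of
  half-edges (vertex, element). Between distinct vertices S, T the edge for the pair
  (i', j') with i' in S, j' in T is {(S,i'),(T,j')}; a loop at S for the unordered pair
  of distinct elements i', j' of S is {(S,i'),(S,j')}.\<close>
definition fsg_edges :: "nat \<Rightarrow> (nat set \<times> nat) set set" where
  "fsg_edges n = {{(S, i), (T, j)} | S T i j.
      S \<in> fsg_vertices n \<and> T \<in> fsg_vertices n \<and> i \<in> S \<and> j \<in> T \<and> i \<noteq> j
      \<and> i + j \<in> range fib}"

definition edge_ends :: "('v \<times> 'l) set \<Rightarrow> 'v set" where
  "edge_ends e = fst ` e"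

definition eulerian :: "'v set \<Rightarrow> 'e set \<Rightarrow> ('e \<Rightarrow> 'v set) \<Rightarrow> bool" where
  "eulerian V E ends \<longleftrightarrow> (\<exists>es vs.
      distinct es \<and> set es = E \<and> length vs = Suc (length es) \<and> set vs \<subseteq> V \<and>
      hd vs = last vs \<and>
      (\<forall>k < length es. ends (es ! k) = {vs ! k, vs ! Suc k}))"

end

theory Submission
  imports Defs
begin

text \<open>
  Every vertex S of the graph has even degree: its half-edges correspond to the triples
  (i, j, T) with i \<in> S, j \<noteq> i, i + j a Fibonacci number and T a vertex containing j, and
  for fixed (i, j) there are 2^(n-1) such T. Moreover the vertex {1..n} is adjacent to
  every other vertex, since every i \<le> n has a partner j \<le> n, j \<noteq> i, with i + j Fibonacci.
  A multigraph with even degrees in which one vertex is adjacent to all others is Eulerian: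
  a longest trail is closed, because its open end would have odd degree in the trail and
  could be extended, and it uses every edge, because it can be rotated to start at a vertex
  with an unused edge.
\<close>

section \<open>Eulerian multigraphs with a universal vertex\<close>

fun walk :: "'v set \<Rightarrow> 'v list \<Rightarrow> ('v \<times> 'l) set list \<Rightarrow> bool" where
  "walk V [v] [] \<longleftrightarrow> v \<in> V"
| "walk V (v # w # vs) (e # es) \<longleftrightarrow> v \<in> V \<and> fst ` e = {v, w} \<and> walk V (w # vs) es"
| "walk V _ _ \<longleftrightarrow> False"

definition incidence :: "('v \<times> 'l) set \<Rightarrow> 'v \<Rightarrow> nat" where
  "incidence e x = card {h \<in> e. fst h = x}"

definition degree :: "('v \<times> 'l) set set \<Rightarrow> 'v \<Rightarrow> nat" where
  "degree E x = (\<Sum>e\<in>E. incidence e x)"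

lemma walk_nonempty: "walk V vs es \<Longrightarrow> vs \<noteq> []"
  by (induction V vs es rule: walk.induct) auto

lemma walk_length: "walk V vs es \<Longrightarrow> length vs = Suc (length es)"
  by (induction V vs es rule: walk.induct) auto

lemma walk_vertices_subset: "walk V vs es \<Longrightarrow> set vs \<subseteq> V"
  by (induction V vs es rule: walk.induct) auto

lemma walk_edge_nth:
  "walk V vs es \<Longrightarrow> k < length es \<Longrightarrow> fst ` (es ! k) = {vs ! k, vs ! Suc k}"
  by (induction V vs es arbitrary: k rule: walk.induct) (auto simp: nth_Cons split: nat.split)

lemma walk_edge_ends_subset:
  assumes "walk V vs es" "e \<in> set es"
  shows "fst ` e \<subseteq> set vs"
proof -
  obtain k where k: "k < length es" "e = es ! k" using assms(2) by (metis in_set_conv_nth)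
  then have "Suc k < length vs" using walk_length[OF assms(1)] by simp
  then show ?thesis using walk_edge_nth[OF assms(1) k(1)] k(2) by auto
qed

lemma walk_append:
  "walk V vs es \<Longrightarrow> walk V ws fs \<Longrightarrow> last vs = hd ws \<Longrightarrow> walk V (vs @ tl ws) (es @ fs)"
proof (induction V vs es rule: walk.induct)
  case (1 V v)
  then show ?case using walk_nonempty[of V ws fs] by (cases ws) auto
qed auto

lemma walk_split:
  "walk V vs es \<Longrightarrow> x \<in> set vs \<Longrightarrow>
    \<exists>us ws fs gs. walk V us fs \<and> walk V ws gs \<and> last us = x \<and> hd ws = x \<and>
      vs = us @ tl ws \<and> es = fs @ gs"
proof (induction V vs es rule: walk.induct)
  case (1 V v)
  then show ?case by (intro exI[of _ "[v]"] exI[of _ "[]"]) auto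
next
  case (2 V v w vs e es)
  show ?case
  proof (cases "x = v")
    case True
    with "2.prems" show ?thesis
      by (intro exI[of _ "[v]"] exI[of _ "v # w # vs"] exI[of _ "[]"] exI[of _ "e # es"]) auto
  next
    case False
    with 2 obtain us ws fs gs where split: "walk V us fs" "walk V ws gs" "last us = x" "hd ws = x"
      "w # vs = us @ tl ws" "es = fs @ gs" by auto
    then obtain us' where "us = w # us'" using walk_nonempty by (cases us) auto
    with 2 split show ?thesis
      by (intro exI[of _ "v # us"] exI[of _ ws] exI[of _ "e # fs"] exI[of _ gs]) auto
  qed
qed auto

lemma closed_walk_rotate:
  assumes "walk V vs es" "hd vs = last vs" "x \<in> set vs"
  obtains ws fs gs where "walk V ws (gs @ fs)" "hd ws = x" "es = fs @ gs"
proof -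
  obtain us ws fs gs where split: "walk V us fs" "walk V ws gs" "last us = x" "hd ws = x"
    "vs = us @ tl ws" "es = fs @ gs"
    using walk_split[OF assms(1,3)] by blast
  have "us \<noteq> []" "ws \<noteq> []" using split(1,2) walk_nonempty by blast+
  then have "hd us = hd vs" "last ws = last vs"
    using split(3-5) by (auto simp: hd_append) (cases ws; auto simp: last_append)
  then have "walk V (ws @ tl us) (gs @ fs)"
    using walk_append[OF split(2,1)] assms(2) by simp
  with \<open>ws \<noteq> []\<close> split(4,6) show thesis by (intro that[of "ws @ tl us"]) auto
qed

lemma walk_Cons_edge:
  assumes "walk V vs es" "card e = 2" "fst ` e \<subseteq> V" "hd vs \<in> fst ` e"
  obtains y where "walk V (y # vs) (e # es)"
proof -
  obtain h1 h2 where e: "e = {h1, h2}" using assms(2) card_2_iff by metis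
  obtain y where y: "fst ` e = {y, hd vs}"
  proof (cases "hd vs = fst h1")
    case True
    then show thesis using e by (intro that[of "fst h2"]) auto
  next
    case False
    then show thesis using e assms(4) by (intro that[of "fst h1"]) auto
  qed
  obtain r where "vs = hd vs # r" using walk_nonempty[OF assms(1)] by (cases vs) auto
  then have "walk V (y # vs) (e # es)" using assms(1,3) y by (metis walk.simps(2) insert_subset)
  then show thesis by (rule that)
qed

lemma incidence_two_ends:
  assumes "card e = 2" "fst ` e = {v, w}"
  shows "incidence e x = (if x = v then 1 else 0) + (if x = w then 1 else 0)"
proof -
  obtain h1 h2 where e: "e = {h1, h2}" "h1 \<noteq> h2" using assms(1) card_2_iff by metis
  have "{h \<in> e. fst h = x} = (if fst h1 = x then {h1} else {}) \<union> (if fst h2 = x then {h2} else {})"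
    using e(1) by auto
  then have "incidence e x = (if fst h1 = x then 1 else 0) + (if fst h2 = x then 1 else 0)"
    unfolding incidence_def using e(2) by (simp add: card_Un_disjoint)
  moreover have "{fst h1, fst h2} = {v, w}" using assms(2) e(1) by simp
  then have "fst h1 = v \<and> fst h2 = w \<or> fst h1 = w \<and> fst h2 = v"
    by (simp add: doubleton_eq_iff)
  ultimately show ?thesis by auto
qed

lemma walk_incidence_parity:
  "walk V vs es \<Longrightarrow> \<forall>e\<in>set es. card e = 2 \<Longrightarrow>
    even ((\<Sum>e\<leftarrow>es. incidence e x) + (if x = hd vs then 1 else 0) + (if x = last vs then 1 else 0))"
proof (induction V vs es rule: walk.induct)
  case (2 V v w vs e es)
  then have "incidence e x = (if x = v then 1 else 0) + (if x = w then 1 else 0)"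
    by (intro incidence_two_ends) auto
  then have "(\<Sum>e\<leftarrow>e # es. incidence e x) + (if x = hd (v # w # vs) then 1 else 0)
        + (if x = last (v # w # vs) then 1 else 0)
      = ((\<Sum>e\<leftarrow>es. incidence e x) + (if x = w then 1 else 0) + (if x = last (w # vs) then 1 else 0))
        + 2 * (if x = v then 1 else 0)"
    by simp
  moreover have "even ((\<Sum>e\<leftarrow>es. incidence e x) + (if x = w then 1 else 0) + (if x = last (w # vs) then 1 else 0))"
    using 2 by simp
  ultimately show ?case by (metis dvd_add dvd_triv_left)
qed auto

lemma degree_eq_card_Sigma:
  assumes "finite E" "\<forall>e\<in>E. finite e"
  shows "degree E x = card (SIGMA e:E. {h \<in> e. fst h = x})"
  unfolding degree_def incidence_def using assms by (simp add: card_SigmaI)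

definition trail :: "'v set \<Rightarrow> ('v \<times> 'l) set set \<Rightarrow> 'v list \<Rightarrow> ('v \<times> 'l) set list \<Rightarrow> bool" where
  "trail V E vs es \<longleftrightarrow> walk V vs es \<and> distinct es \<and> set es \<subseteq> E"

lemma ex_longest_trail:
  assumes "finite E" "c \<in> V"
  obtains vs es where "trail V E vs es" "\<And>vs' es'. trail V E vs' es' \<Longrightarrow> length es' \<le> length es"
proof -
  have "length es \<le> card E" if "trail V E vs es" for vs es
  proof -
    from that have "length es = card (set es)" "set es \<subseteq> E"
      unfolding trail_def by (auto simp: distinct_card)
    with \<open>finite E\<close> show ?thesis by (simp add: card_mono)
  qed
  then have "\<forall>q. case_prod (trail V E) q \<longrightarrow> length (snd q) < Suc (card E)"
    by (simp add: le_imp_less_Suc split: prod.split)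
  moreover have "case_prod (trail V E) ([c], [])" unfolding trail_def using \<open>c \<in> V\<close> by simp
  ultimately have "\<exists>p. case_prod (trail V E) p \<and>
      (\<forall>q. case_prod (trail V E) q \<longrightarrow> length (snd q) \<le> length (snd p))"
    by (intro ex_has_greatest_nat)
  then obtain vs es where "trail V E vs es"
    and "\<forall>q. case_prod (trail V E) q \<longrightarrow> length (snd q) \<le> length es"
    by (metis prod.collapse prod.case)
  then show thesis by (intro that) auto
qed

lemma trail_Cons_edge:
  assumes "trail V E vs es" "e \<in> E - set es" "card e = 2" "fst ` e \<subseteq> V" "hd vs \<in> fst ` e"
  obtains y where "trail V E (y # vs) (e # es)"
proof -
  from assms(1) have "walk V vs es" unfolding trail_def by blast
  from this assms(3-5) obtain y where "walk V (y # vs) (e # es)" by (rule walk_Cons_edge)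
  with assms(1,2) have "trail V E (y # vs) (e # es)" unfolding trail_def by auto
  then show thesis by (rule that)
qed

lemma unused_edge_at_open_end:
  assumes "trail V E vs es" "finite E" and card2: "\<forall>e\<in>E. card e = 2"
    and "even (degree E (hd vs))" and open_walk: "hd vs \<noteq> last vs"
  obtains e where "e \<in> E - set es" "hd vs \<in> fst ` e"
proof -
  let ?x = "hd vs"
  from assms(1) have walk: "walk V vs es" and "distinct es" "set es \<subseteq> E"
    unfolding trail_def by auto
  have "degree (set es) ?x = (\<Sum>e\<leftarrow>es. incidence e ?x)"
    unfolding degree_def using \<open>distinct es\<close> by (rule sum.distinct_set_conv_list)
  then have "odd (degree (set es) ?x)"
    using walk_incidence_parity[OF walk, of ?x] card2 \<open>set es \<subseteq> E\<close> open_walk by auto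
  moreover have "degree E ?x = degree (E - set es) ?x + degree (set es) ?x"
    unfolding degree_def using \<open>set es \<subseteq> E\<close> \<open>finite E\<close> by (rule sum.subset_diff)
  ultimately have "odd (degree (E - set es) ?x)"
    using \<open>even (degree E ?x)\<close> by auto
  then obtain e where "e \<in> E - set es" "incidence e ?x \<noteq> 0"
    unfolding degree_def by (metis dvd_0_right sum.neutral)
  moreover from this(2) have "?x \<in> fst ` e"
    unfolding incidence_def by (metis (mono_tags, lifting) card.empty empty_Collect_eq image_eqI)
  ultimately show thesis using that by blast
qed

lemma unused_edge_at_walk_vertex:
  assumes walk: "walk V vs es" and unused: "set es \<subset> E"
    and ends: "\<forall>e\<in>E. fst ` e \<subseteq> V" and nonempty: "\<forall>e\<in>E. e \<noteq> {}"
    and universal: "\<forall>v\<in>V. v \<noteq> c \<longrightarrow> (\<exists>e\<in>E. fst ` e = {v, c})"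
  obtains x e where "x \<in> set vs" "e \<in> E - set es" "x \<in> fst ` e"
proof -
  have used_ends: "fst ` e \<subseteq> set vs" if "e \<in> set es" for e
    using walk_edge_ends_subset[OF walk that] .
  have edge_to_c: "\<exists>e\<in>E - set es. fst ` e = {v, c}"
    if "v \<in> V" "v \<noteq> c" and outside: "v \<notin> set vs \<or> c \<notin> set vs" for v
  proof -
    from that universal obtain e where e: "e \<in> E" "fst ` e = {v, c}" by blast
    then have "e \<notin> set es" using used_ends outside by blast
    with e show ?thesis by blast
  qed
  show thesis
  proof (cases "c \<in> set vs")
    case True
    obtain e0 where "e0 \<in> E - set es" using unused by blast
    moreover from this obtain v where "v \<in> fst ` e0" using nonempty by blast
    ultimately have e0: "e0 \<in> E - set es" "v \<in> fst ` e0" .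
    show thesis
    proof (cases "v \<in> set vs")
      case True
      from True e0 show thesis by (rule that)
    next
      case False
      with e0 ends \<open>c \<in> set vs\<close> obtain e where "e \<in> E - set es" "fst ` e = {v, c}"
        using edge_to_c[of v] by blast
      with \<open>c \<in> set vs\<close> show thesis by (intro that) auto
    qed
  next
    case False
    have "hd vs \<in> set vs" using walk_nonempty[OF walk] by simp
    with False obtain e where "e \<in> E - set es" "fst ` e = {hd vs, c}"
      using edge_to_c[of "hd vs"] walk_vertices_subset[OF walk] by blast
    with \<open>hd vs \<in> set vs\<close> show thesis by (intro that) auto
  qed
qed

theorem eulerian_if_even_degree_and_universal_vertex:
  assumes "finite E" and card2: "\<forall>e\<in>E. card e = 2" and ends: "\<forall>e\<in>E. fst ` e \<subseteq> V"
    and even_degree: "\<forall>x. even (degree E x)" and "c \<in> V"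
    and universal: "\<forall>v\<in>V. v \<noteq> c \<longrightarrow> (\<exists>e\<in>E. fst ` e = {v, c})"
  shows "eulerian V E edge_ends"
proof -
  obtain vs es where "trail V E vs es"
    and longest: "\<And>vs' es'. trail V E vs' es' \<Longrightarrow> length es' \<le> length es"
    using ex_longest_trail[OF \<open>finite E\<close> \<open>c \<in> V\<close>] by blast
  then have walk: "walk V vs es" and "distinct es" "set es \<subseteq> E" unfolding trail_def by auto
  have no_extension: False
    if "trail V E vs' es'" "length es' = length es" "e \<in> E - set es'" "hd vs' \<in> fst ` e" for vs' es' e
  proof -
    have "card e = 2" "fst ` e \<subseteq> V" using that(3) card2 ends by blast+
    from that(1,3) this that(4) obtain y where "trail V E (y # vs') (e # es')"
      by (rule trail_Cons_edge)
    from longest[OF this] \<open>length es' = length es\<close> show False by simp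
  qed
  have closed: "hd vs = last vs"
  proof (rule ccontr)
    assume "hd vs \<noteq> last vs"
    with \<open>trail V E vs es\<close> \<open>finite E\<close> card2 even_degree[rule_format]
    obtain e where "e \<in> E - set es" "hd vs \<in> fst ` e"
      by (rule unused_edge_at_open_end)
    with no_extension[OF \<open>trail V E vs es\<close>] show False by blast
  qed
  have covers: "set es = E"
  proof (rule ccontr)
    assume "set es \<noteq> E"
    with \<open>set es \<subseteq> E\<close> have "set es \<subset> E" by blast
    moreover have "\<forall>e\<in>E. e \<noteq> {}" using card2 by fastforce
    ultimately obtain x e where x: "x \<in> set vs" "e \<in> E - set es" "x \<in> fst ` e"
      using unused_edge_at_walk_vertex[OF walk _ ends _ universal] by blast
    obtain ws fs gs where ws: "walk V ws (gs @ fs)" "hd ws = x" "es = fs @ gs"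
      using closed_walk_rotate[OF walk closed x(1)] by blast
    with \<open>trail V E vs es\<close> have "trail V E ws (gs @ fs)" unfolding trail_def by auto
    with x ws show False by (intro no_extension[of ws "gs @ fs" e]) auto
  qed
  have "length vs = Suc (length es)" "set vs \<subseteq> V"
    "\<forall>k < length es. fst ` (es ! k) = {vs ! k, vs ! Suc k}"
    using walk_length[OF walk] walk_vertices_subset[OF walk] walk_edge_nth[OF walk] by auto
  with \<open>distinct es\<close> covers closed show ?thesis
    unfolding eulerian_def edge_ends_def by (intro exI[of _ es] exI[of _ vs]) simp
qed

section \<open>The Fibonacci-sum set-graph\<close>

lemma ex_fib_bracket: "2 \<le> i \<Longrightarrow> \<exists>k\<ge>3. fib k \<le> i \<and> i < fib (Suc k)"
proof (induction i rule: nat_induct_at_least)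
  case base
  show ?case by (intro exI[of _ 3]) (simp add: numeral_eq_Suc)
next
  case (Suc i)
  then obtain k where k: "3 \<le> k" "fib k \<le> i" "i < fib (Suc k)" by blast
  show ?case
  proof (cases "Suc i < fib (Suc k)")
    case True
    with k show ?thesis by (intro exI[of _ k]) auto
  next
    case False
    with k have "Suc i = fib (Suc k)" by simp
    moreover have "fib (Suc k) < fib (Suc (Suc k))" using k fib_neq_0_nat by simp
    ultimately show ?thesis using k by (intro exI[of _ "Suc k"]) auto
  qed
qed

lemma ex_fib_partner:
  assumes "i \<in> {1..n}" "2 \<le> n"
  obtains j where "j \<in> {1..n}" "i \<noteq> j" "i + j \<in> range fib"
proof (cases "i = 1")
  case True
  have "(1::nat) + 2 = fib 4" by (simp add: numeral_eq_Suc)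
  with True assms show thesis by (intro that[of 2]) auto
next
  case False
  with assms(1) have "2 \<le> i" by simp
  then obtain k where k: "3 \<le> k" "fib k \<le> i" "i < fib (Suc k)"
    using ex_fib_bracket by blast
  \<comment> \<open>The partner fib (k + 1) - i is at most fib (k - 1), which is less than fib k \<le> i.\<close>
  define m where "m = k - 2"
  with k(1) have m: "k = Suc (Suc m)" "0 < m" by auto
  then have "fib (Suc k) < 2 * fib k" using fib_neq_0_nat[of m] by simp
  with k assms(1) show thesis by (intro that[of "fib (Suc k) - i"]) auto
qed

lemma card_subsets_containing:
  assumes "finite A" "a \<in> A"
  shows "card {B. B \<subseteq> A \<and> a \<in> B} = 2 ^ (card A - 1)"
proof -
  have "{B. B \<subseteq> A \<and> a \<in> B} = insert a ` Pow (A - {a})"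
  proof
    show "{B. B \<subseteq> A \<and> a \<in> B} \<subseteq> insert a ` Pow (A - {a})"
    proof
      fix B assume "B \<in> {B. B \<subseteq> A \<and> a \<in> B}"
      then have "B = insert a (B - {a})" "B - {a} \<in> Pow (A - {a})" by auto
      then show "B \<in> insert a ` Pow (A - {a})" by (rule image_eqI)
    qed
  qed (use assms(2) in auto)
  moreover have "inj_on (insert a) (Pow (A - {a}))"
    unfolding inj_on_def by blast
  ultimately show ?thesis
    using assms by (simp add: card_image card_Pow)
qed

lemma finite_fsg_vertices: "finite (fsg_vertices n)"
  unfolding fsg_vertices_def by (rule finite_subset[of _ "Pow {1..n}"]) auto

lemma finite_fsg_edges: "finite (fsg_edges n)"
proof (rule finite_subset)
  show "fsg_edges n \<subseteq> Pow (fsg_vertices n \<times> {1..n})"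
    unfolding fsg_edges_def fsg_vertices_def by auto
qed (simp add: finite_fsg_vertices)

lemma card_fsg_edge: "e \<in> fsg_edges n \<Longrightarrow> card e = 2"
  unfolding fsg_edges_def by auto

lemma fsg_edge_ends_subset: "e \<in> fsg_edges n \<Longrightarrow> fst ` e \<subseteq> fsg_vertices n"
  unfolding fsg_edges_def by auto

lemma fsg_edgesI:
  "S \<in> fsg_vertices n \<Longrightarrow> T \<in> fsg_vertices n \<Longrightarrow> i \<in> S \<Longrightarrow> j \<in> T \<Longrightarrow> i \<noteq> j \<Longrightarrow>
    i + j \<in> range fib \<Longrightarrow> {(S, i), (T, j)} \<in> fsg_edges n"
  unfolding fsg_edges_def by blast

lemma fsg_universal_vertex:
  assumes "S \<in> fsg_vertices n" "S \<noteq> {1..n}"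
  shows "\<exists>e\<in>fsg_edges n. fst ` e = {S, {1..n}}"
proof -
  obtain i where i: "i \<in> S" using assms(1) unfolding fsg_vertices_def by blast
  have "S \<subseteq> {1..n}" using assms(1) unfolding fsg_vertices_def by blast
  have "2 \<le> n"
  proof (rule ccontr)
    assume "\<not> 2 \<le> n"
    with i \<open>S \<subseteq> {1..n}\<close> have "n = 1" by force
    with i \<open>S \<subseteq> {1..n}\<close> have "S = {1..n}" by auto
    with assms(2) show False ..
  qed
  obtain j where j: "j \<in> {1..n}" "i \<noteq> j" "i + j \<in> range fib"
    using ex_fib_partner[of i n] i \<open>S \<subseteq> {1..n}\<close> \<open>2 \<le> n\<close> by blast
  have "{1..n} \<in> fsg_vertices n" using \<open>2 \<le> n\<close> unfolding fsg_vertices_def by auto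
  with assms(1) i j have "{(S, i), ({1..n}, j)} \<in> fsg_edges n"
    by (intro fsg_edgesI)
  then show ?thesis by (rule bexI[rotated]) simp
qed

definition fsg_pairs :: "nat \<Rightarrow> nat set \<Rightarrow> (nat \<times> nat) set" where
  "fsg_pairs n S = {(i, j). S \<in> fsg_vertices n \<and> i \<in> S \<and> j \<in> {1..n} \<and> i \<noteq> j \<and> i + j \<in> range fib}"

definition fsg_half_edge :: "nat set \<Rightarrow> (nat \<times> nat) \<times> nat set \<Rightarrow> (nat set \<times> nat) set \<times> (nat set \<times> nat)" where
  "fsg_half_edge S q = ({(S, fst (fst q)), (snd q, snd (fst q))}, (S, fst (fst q)))"

lemma fsg_half_edge_apply [simp]: "fsg_half_edge S ((i, j), T) = ({(S, i), (T, j)}, (S, i))"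
  unfolding fsg_half_edge_def by simp

lemma inj_on_fsg_half_edge: "inj_on (fsg_half_edge S) {((i, j), T). i \<noteq> j}"
proof (rule inj_onI)
  fix q q' assume q: "q \<in> {((i, j), T). i \<noteq> j}" and eq: "fsg_half_edge S q = fsg_half_edge S q'"
  obtain i j T i' j' T' where qs: "q = ((i, j), T)" "q' = ((i', j'), T')" by (metis prod.collapse)
  with q have "i \<noteq> j" by simp
  from eq have pair: "({(S, i), (T, j)}, (S, i)) = ({(S, i'), (T', j')}, (S, i'))"
    unfolding qs by (simp only: fsg_half_edge_apply)
  then have "i = i'" by simp
  with pair have "{(S, i), (T, j)} = {(S, i), (T', j')}" by simp
  with \<open>i \<noteq> j\<close> have "(T, j) = (T', j')" by (auto simp: doubleton_eq_iff)
  with qs \<open>i = i'\<close> show "q = q'" by simp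
qed

lemma fsg_half_edge_image:
  "fsg_half_edge S ` (SIGMA p:fsg_pairs n S. {T \<in> fsg_vertices n. snd p \<in> T})
    = (SIGMA e:fsg_edges n. {h \<in> e. fst h = S})" (is "?f ` ?A = ?H")
proof
  show "?f ` ?A \<subseteq> ?H"
  proof (rule image_subsetI)
    fix q assume "q \<in> ?A"
    then obtain i j T where q: "q = ((i, j), T)" "(i, j) \<in> fsg_pairs n S" "T \<in> fsg_vertices n" "j \<in> T"
      by (cases q) auto
    then have "{(S, i), (T, j)} \<in> fsg_edges n" unfolding fsg_pairs_def by (blast intro: fsg_edgesI)
    with q(1) show "?f q \<in> ?H" by simp
  qed
next
  show "?H \<subseteq> ?f ` ?A"
  proof
    fix z assume "z \<in> ?H"
    then obtain e i' where z: "z = (e, (S, i'))" "e \<in> fsg_edges n" "(S, i') \<in> e" by auto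
    then obtain S' T i j where e: "e = {(S', i), (T, j)}" "S' \<in> fsg_vertices n" "T \<in> fsg_vertices n"
      "i \<in> S'" "j \<in> T" "i \<noteq> j" "i + j \<in> range fib"
      unfolding fsg_edges_def by blast
    then have "i \<in> {1..n}" "j \<in> {1..n}" unfolding fsg_vertices_def by blast+
    from z(3) e(1) consider "S = S'" "i' = i" | "S = T" "i' = j" by blast
    then show "z \<in> ?f ` ?A"
    proof cases
      case 1
      with e \<open>j \<in> {1..n}\<close> have "((i, j), T) \<in> ?A" unfolding fsg_pairs_def by simp
      moreover from 1 z(1) e(1) have "z = ?f ((i, j), T)" by simp
      ultimately show ?thesis by (rule rev_image_eqI)
    next
      case 2
      with e \<open>i \<in> {1..n}\<close> have "((j, i), S') \<in> ?A" unfolding fsg_pairs_def by (simp add: add.commute)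
      moreover from 2 z(1) e(1) have "z = ?f ((j, i), S')" by (simp add: insert_commute)
      ultimately show ?thesis by (rule rev_image_eqI)
    qed
  qed
qed

lemma degree_fsg:
  "degree (fsg_edges n) S = (\<Sum>p\<in>fsg_pairs n S. card {T \<in> fsg_vertices n. snd p \<in> T})"
proof -
  have "\<forall>e\<in>fsg_edges n. finite e" using card_fsg_edge by (simp add: card_ge_0_finite)
  with finite_fsg_edges have "degree (fsg_edges n) S = card (SIGMA e:fsg_edges n. {h \<in> e. fst h = S})"
    by (rule degree_eq_card_Sigma)
  also have "\<dots> = card (SIGMA p:fsg_pairs n S. {T \<in> fsg_vertices n. snd p \<in> T})"
    unfolding fsg_half_edge_image[symmetric]
  proof (rule card_image, rule inj_on_subset[OF inj_on_fsg_half_edge])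
    show "(SIGMA p:fsg_pairs n S. {T \<in> fsg_vertices n. snd p \<in> T}) \<subseteq> {((i, j), T). i \<noteq> j}"
      unfolding fsg_pairs_def by auto
  qed
  also have "\<dots> = (\<Sum>p\<in>fsg_pairs n S. card {T \<in> fsg_vertices n. snd p \<in> T})"
  proof (rule card_SigmaI)
    show "finite (fsg_pairs n S)"
      by (rule finite_subset[of _ "{1..n} \<times> {1..n}"]) (auto simp: fsg_pairs_def fsg_vertices_def)
  qed (simp add: finite_fsg_vertices)
  finally show ?thesis .
qed

lemma even_degree_fsg: "even (degree (fsg_edges n) S)"
  unfolding degree_fsg
proof (rule dvd_sum)
  fix p assume "p \<in> fsg_pairs n S"
  then obtain i j where "p = (i, j)" "i \<in> S" "S \<in> fsg_vertices n" "j \<in> {1..n}" "i \<noteq> j"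
    unfolding fsg_pairs_def by blast
  then have "2 \<le> n" "snd p \<in> {1..n}" unfolding fsg_vertices_def by auto
  moreover have "{T \<in> fsg_vertices n. snd p \<in> T} = {T. T \<subseteq> {1..n} \<and> snd p \<in> T}"
    unfolding fsg_vertices_def by auto
  ultimately show "even (card {T \<in> fsg_vertices n. snd p \<in> T})"
    by (simp add: card_subsets_containing)
qed

theorem corollary2p8:
  fixes n :: nat
  assumes "n \<ge> 1"
  shows "eulerian (fsg_vertices n) (fsg_edges n) edge_ends"
proof (rule eulerian_if_even_degree_and_universal_vertex)
  show "{1..n} \<in> fsg_vertices n" using assms unfolding fsg_vertices_def by auto
qed (use finite_fsg_edges card_fsg_edge fsg_edge_ends_subset even_degree_fsg fsg_universal_vertex in auto)

end
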